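(* Let $N\ge 2$, let $s_1(0),\dots,s_N(0)\in\mathbb R$, and let $s^*$ lie in the convex hull of $\{s_1(0),\dots,s_N(0)\}$. Then there exist weights $a_{ij}\ge 0$ ($1\le i\ne j\le N$) such that the solution of $s_i'=\sum_{j\ne i}a_{ij}(s_j-s_i)$, $i=1,\dots,N$, with these initial opinions satisfies $\lim_{t\to\infty}\mathbf s(t)=s^*(1,\dots,1)^T$. *)

theory Defs
  imports "HOL-Analysis.Analysis"
begin

text \<open>The opinion profile at time t is s t :: nat => real
  (only indices in 1..N matter). s solves the linear opinion dynamics
  s_i' = sum_{j /= i} a_ij (s_j - s_i) on [0, infinity) with initial opinions s0.\<close>

definition opinion_solution ::
  "nat \<Rightarrow> (nat \<Rightarrow> nat \<Rightarrow> real) \<Rightarrow> (nat \<Rightarrow> real) \<Rightarrow> (real \<Rightarrow> nat \<Rightarrow> real) \<Rightarrow> bool" where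
  "opinion_solution N a s0 s \<longleftrightarrow>
     (\<forall>i\<in>{1..N}. s 0 i = s0 i) \<and>
     (\<forall>i\<in>{1..N}. \<forall>t\<ge>0.
        ((\<lambda>\<tau>. s \<tau> i) has_real_derivative
           (\<Sum>j\<in>{1..N} - {i}. a i j * (s t j - s t i))) (at t within {0..}))"

end

theory Submission
  imports Defs "HOL-Real_Asymp.Real_Asymp"
begin

text \<open>Write \<open>s\<^sup>* = \<Sum>\<^sub>j w\<^sub>j s\<^sub>j(0)\<close> with barycentric weights \<open>w\<close> and let every agent listen to
  agent \<open>j\<close> with the same weight \<open>a\<^sub>i\<^sub>j = w\<^sub>j\<close>. Then \<open>s\<^sub>i' = m - s\<^sub>i\<close>, where \<open>m = \<Sum>\<^sub>j w\<^sub>j s\<^sub>j\<close>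
  is the \<open>w\<close>-weighted mean opinion. Because \<open>\<Sum>\<^sub>j w\<^sub>j = 1\<close>, the mean is conserved,
  \<open>m' = m - m = 0\<close>, so \<open>m = s\<^sup>*\<close> for all time and every opinion relaxes exponentially:
  \<open>s\<^sub>i(t) = s\<^sup>* + (s\<^sub>i(0) - s\<^sup>*) e\<^sup>-\<^sup>t\<close>.\<close>

lemma sum_image_eq_sum_inverse_fibre_card:
  fixes f :: "'a \<Rightarrow> 'b" and h :: "'b \<Rightarrow> 'c::real_vector"
  assumes "finite I"
  shows "(\<Sum>i\<in>I. (1 / card {k\<in>I. f k = f i}) *\<^sub>R h (f i)) = (\<Sum>v\<in>f ` I. h v)"
proof -
  have "(\<Sum>i | i \<in> I \<and> f i = v. (1 / card {k\<in>I. f k = f i}) *\<^sub>R h (f i)) = h v"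
    if "v \<in> f ` I" for v
  proof -
    have "{k\<in>I. f k = v} \<noteq> {}" using that by auto
    then have "card {k\<in>I. f k = v} \<noteq> 0" using assms by simp
    moreover have "(\<Sum>i | i \<in> I \<and> f i = v. (1 / card {k\<in>I. f k = f i}) *\<^sub>R h (f i))
        = (\<Sum>i | i \<in> I \<and> f i = v. (1 / card {k\<in>I. f k = v}) *\<^sub>R h v)"
      by (rule sum.cong) auto
    ultimately show ?thesis by (simp add: sum_constant_scaleR)
  qed
  then show ?thesis by (simp add: sum.image_gen[OF assms, of _ f])
qed

lemma convex_hull_finite_image:
  fixes f :: "'a \<Rightarrow> 'b::real_vector"
  assumes "finite I" "x \<in> convex hull (f ` I)"
  obtains w where "\<forall>i\<in>I. 0 \<le> w i" "sum w I = 1" "(\<Sum>i\<in>I. w i *\<^sub>R f i) = x"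
proof -
  obtain u where u: "\<forall>v\<in>f ` I. 0 \<le> u v" "sum u (f ` I) = 1" "(\<Sum>v\<in>f ` I. u v *\<^sub>R v) = x"
    using assms by (auto simp: convex_hull_finite)
  define w where "w i = u (f i) / card {k\<in>I. f k = f i}" for i
  have "\<forall>i\<in>I. 0 \<le> w i" using u(1) by (simp add: w_def)
  moreover have "sum w I = 1"
    using sum_image_eq_sum_inverse_fibre_card[OF assms(1), of f u] u(2) by (simp add: w_def)
  moreover have "(\<Sum>i\<in>I. w i *\<^sub>R f i) = x"
    using sum_image_eq_sum_inverse_fibre_card[OF assms(1), of f "\<lambda>v. u v *\<^sub>R v"] u(3) by (simp add: w_def)
  ultimately show thesis by (rule that)
qed

lemma has_real_derivative_relaxation_eq:
  fixes f :: "real \<Rightarrow> real"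
  assumes "\<forall>t\<ge>0. (f has_real_derivative c * (L - f t)) (at t within {0..})" and "t \<ge> 0"
  shows "f t = L + (f 0 - L) * exp (- c * t)"
proof -
  have "\<exists>k. \<forall>x\<in>{0..}. (f x - L) * exp (c * x) = k"
  proof (rule has_field_derivative_zero_constant)
    fix x :: real assume "x \<in> {0..}"
    then have "((\<lambda>x. (f x - L) * exp (c * x)) has_real_derivative
        c * (L - f x) * exp (c * x) + (f x - L) * (exp (c * x) * c)) (at x within {0..})"
      using assms(1) by (auto intro!: derivative_eq_intros)
    then show "((\<lambda>x. (f x - L) * exp (c * x)) has_real_derivative 0) (at x within {0..})"
      by (simp add: algebra_simps)
  qed simp
  then obtain k where k: "\<forall>x\<in>{0..}. (f x - L) * exp (c * x) = k" by blast
  have "(f t - L) * exp (c * t) = (f 0 - L) * exp (c * 0)"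
    using k[rule_format, of t] k[rule_format, of 0] assms(2) by simp
  then show ?thesis by (simp add: exp_minus field_simps)
qed

lemma sum_weighted_drift:
  fixes w x :: "'a \<Rightarrow> real"
  assumes "finite A" "sum w A = 1"
  shows "(\<Sum>j\<in>A - {i}. w j * (x j - x i)) = (\<Sum>j\<in>A. w j * x j) - x i"
proof -
  have "(\<Sum>j\<in>A - {i}. w j * (x j - x i)) = (\<Sum>j\<in>A. w j * (x j - x i))"
    using assms(1) by (simp add: sum_diff1)
  also have "\<dots> = (\<Sum>j\<in>A. w j * x j) - sum w A * x i"
    by (simp add: right_diff_distrib sum_subtractf sum_distrib_right)
  finally show ?thesis using assms(2) by simp
qed

lemma opinion_solution_broadcast_derivative:
  assumes "opinion_solution N (\<lambda>_. w) s0 s" "sum w {1..N} = 1" "i \<in> {1..N}" "t \<ge> 0"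
  shows "((\<lambda>\<tau>. s \<tau> i) has_real_derivative (\<Sum>j=1..N. w j * s t j) - s t i) (at t within {0..})"
  using assms unfolding opinion_solution_def by (simp add: sum_weighted_drift)

lemma opinion_solution_broadcast_eq:
  assumes s: "opinion_solution N (\<lambda>_. w) s0 s" and w: "sum w {1..N} = 1"
    and m: "(\<Sum>j=1..N. w j * s0 j) = m" and "i \<in> {1..N}" "t \<ge> 0"
  shows "s t i = m + (s0 i - m) * exp (- t)"
proof -
  let ?M = "\<lambda>t. \<Sum>j=1..N. w j * s t j"
  have ds: "((\<lambda>\<tau>. s \<tau> j) has_real_derivative ?M t - s t j) (at t within {0..})"
    if "j \<in> {1..N}" "t \<ge> 0" for j t
    using opinion_solution_broadcast_derivative[OF s w that] .
  have mean_conserved: "(?M has_real_derivative 0) (at t within {0..})" if "t \<ge> 0" for t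
  proof -
    have "(?M has_real_derivative (\<Sum>j=1..N. w j * (?M t - s t j))) (at t within {0..})"
      using ds that by (auto intro!: DERIV_sum DERIV_cmult)
    then show ?thesis using w by (simp add: right_diff_distrib sum_subtractf sum_distrib_right[symmetric])
  qed
  obtain k where k: "\<forall>t\<in>{0..}. ?M t = k"
    using has_field_derivative_zero_constant[of "{0..}" ?M] mean_conserved by auto
  have "?M 0 = m"
    unfolding m[symmetric] using s by (intro sum.cong) (auto simp: opinion_solution_def)
  then have mean: "?M t = m" if "t \<ge> 0" for t
    using k that by auto
  have "\<forall>t\<ge>0. ((\<lambda>\<tau>. s \<tau> i) has_real_derivative 1 * (m - s t i)) (at t within {0..})"
    using ds[OF \<open>i \<in> {1..N}\<close>] mean by simp
  moreover have "s 0 i = s0 i"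
    using s \<open>i \<in> {1..N}\<close> unfolding opinion_solution_def by blast
  ultimately show ?thesis
    using has_real_derivative_relaxation_eq[of "\<lambda>\<tau>. s \<tau> i" 1 m t] \<open>t \<ge> 0\<close> by simp
qed

lemma opinion_solution_broadcast_relaxation:
  assumes w: "sum w {1..N} = 1" and m: "(\<Sum>j=1..N. w j * s0 j) = m"
  shows "opinion_solution N (\<lambda>_. w) s0 (\<lambda>t i. m + (s0 i - m) * exp (- t))"
  unfolding opinion_solution_def
proof (intro conjI ballI allI impI)
  fix i and t :: real
  have "(\<Sum>j=1..N. w j * (m + (s0 j - m) * exp (- t)))
      = (\<Sum>j=1..N. w j * m + (w j * s0 j - w j * m) * exp (- t))"
    by (simp add: algebra_simps)
  also have "\<dots> = sum w {1..N} * m + ((\<Sum>j=1..N. w j * s0 j) - sum w {1..N} * m) * exp (- t)"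
    by (simp add: sum.distrib sum_subtractf sum_distrib_right[symmetric])
  also have "\<dots> = m"
    using w m by simp
  finally have "(\<Sum>j=1..N. w j * (m + (s0 j - m) * exp (- t))) = m" .
  then have "(\<Sum>j\<in>{1..N} - {i}. w j * ((m + (s0 j - m) * exp (- t)) - (m + (s0 i - m) * exp (- t))))
      = (s0 i - m) * (exp (- t) * - 1)"
    using sum_weighted_drift[OF finite_atLeastAtMost w, where x = "\<lambda>j. m + (s0 j - m) * exp (- t)" and i = i]
    by simp
  moreover have "((\<lambda>\<tau>. m + (s0 i - m) * exp (- \<tau>)) has_real_derivative (s0 i - m) * (exp (- t) * - 1)) (at t within {0..})"
    by (auto intro!: derivative_eq_intros)
  ultimately show "((\<lambda>\<tau>. m + (s0 i - m) * exp (- \<tau>)) has_real_derivative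
      (\<Sum>j\<in>{1..N} - {i}. w j * ((m + (s0 j - m) * exp (- t)) - (m + (s0 i - m) * exp (- t))))) (at t within {0..})"
    by simp
qed simp

theorem mainTheorem9:
  fixes N :: nat and s0 :: "nat \<Rightarrow> real" and sstar :: real
  assumes "N \<ge> 2"
    and "sstar \<in> convex hull (s0 ` {1..N})"
  shows "\<exists>a :: nat \<Rightarrow> nat \<Rightarrow> real.
           (\<forall>i\<in>{1..N}. \<forall>j\<in>{1..N}. i \<noteq> j \<longrightarrow> a i j \<ge> 0) \<and>
           (\<exists>s. opinion_solution N a s0 s) \<and>
           (\<forall>s. opinion_solution N a s0 s \<longrightarrow>
                (\<forall>i\<in>{1..N}. ((\<lambda>t. s t i) \<longlongrightarrow> sstar) at_top))"
proof -
  obtain w where w_nonneg: "\<forall>j\<in>{1..N}. 0 \<le> w j" and w_sum: "sum w {1..N} = 1"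
    and w_mean: "(\<Sum>j=1..N. w j * s0 j) = sstar"
    using convex_hull_finite_image[OF finite_atLeastAtMost assms(2)] by auto
  have "((\<lambda>t. s t i) \<longlongrightarrow> sstar) at_top"
    if "opinion_solution N (\<lambda>_. w) s0 s" "i \<in> {1..N}" for s i
  proof (rule Lim_transform_eventually)
    show "((\<lambda>t. sstar + (s0 i - sstar) * exp (- t)) \<longlongrightarrow> sstar) at_top"
      by real_asymp
    show "\<forall>\<^sub>F t in at_top. sstar + (s0 i - sstar) * exp (- t) = s t i"
      using opinion_solution_broadcast_eq[OF that(1) w_sum w_mean that(2)]
      by (auto intro: eventually_mono[OF eventually_ge_at_top[of 0]])
  qed
  then show ?thesis
    using w_nonneg opinion_solution_broadcast_relaxation[OF w_sum w_mean]
    by (intro exI[of _ "\<lambda>_. w"]) auto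
qed

end
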